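(* Let $G$ be the graph defined below. An order automorphism of $\mathbb Q$ is a bijection $\gamma\colon\mathbb Q\to\mathbb Q$ with $q<r \iff \gamma(q)<\gamma(r)$. For such $\gamma$ define $\gamma_\uparrow, \gamma_\downarrow\colon V\to V$ by $\gamma_\uparrow(q^+)=(\gamma(q))^+$, $\gamma_\uparrow(q^-)=(\gamma(q))^-$, $\gamma_\downarrow(q^+)=(-\gamma(q))^-$, $\gamma_\downarrow(q^-)=(-\gamma(q))^+$. Then every $\gamma_\uparrow$ and every $\gamma_\downarrow$ is an automorphism of $G$, and conversely every automorphism of $G$ equals $\gamma_\uparrow$ or $\gamma_\downarrow$ for some order automorphism $\gamma$ of $\mathbb Q$.
   Context: Let $\mathbb Q^+=\{q^+: q\in\mathbb Q\}$ and $\mathbb Q^-=\{q^-: q\in\mathbb Q\}$ be two disjoint copies of $\mathbb Q$. $G$ is the simple undirected graph with vertex set $V=\mathbb Q^+\cup\mathbb Q^-$ in which the edges are exactly the pairs $\{q^+,r^-\}$ with $q,r\in\mathbb Q$ and $q<r$ (there are no edges inside $\mathbb Q^+$ or inside $\mathbb Q^-$). *)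

theory Defs
  imports Main "HOL.Rat"
begin

text \<open>Vertices: the disjoint union of two copies of Q. We represent q^+ as Plus q and q^- as Minus q.\<close>
datatype vert = Plus rat | Minus rat

fun G_edge :: "vert \<Rightarrow> vert \<Rightarrow> bool" where
  "G_edge (Plus q) (Minus r) = (q < r)"
| "G_edge (Minus r) (Plus q) = (q < r)"
| "G_edge _ _ = False"

definition graph_aut :: "(vert \<Rightarrow> vert) \<Rightarrow> bool" where
  "graph_aut f \<longleftrightarrow> bij f \<and> (\<forall>u v. G_edge u v \<longleftrightarrow> G_edge (f u) (f v))"

definition order_aut :: "(rat \<Rightarrow> rat) \<Rightarrow> bool" where
  "order_aut g \<longleftrightarrow> bij g \<and> (\<forall>q r. q < r \<longleftrightarrow> g q < g r)"

fun gamma_up :: "(rat \<Rightarrow> rat) \<Rightarrow> vert \<Rightarrow> vert" where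
  "gamma_up g (Plus q) = Plus (g q)"
| "gamma_up g (Minus q) = Minus (g q)"

fun gamma_down :: "(rat \<Rightarrow> rat) \<Rightarrow> vert \<Rightarrow> vert" where
  "gamma_down g (Plus q) = Minus (- g q)"
| "gamma_down g (Minus q) = Plus (- g q)"

end

theory Submission
  imports Defs
begin

text \<open>Two vertices lie in the same copy of \<open>\<rat>\<close> iff they have a common neighbour, so every
  automorphism either preserves or swaps the two copies. Composing with the reflection
  \<open>q\<^sup>\<plusminus> \<mapsto> (-q)\<^sup>\<mp>\<close> reduces the second case to the first. A copy-preserving automorphism
  maps \<open>q\<^sup>+ \<mapsto> a(q)\<^sup>+\<close> and \<open>r\<^sup>- \<mapsto> b(r)\<^sup>-\<close> with \<open>q < r \<longleftrightarrow> a q < b r\<close>; density of \<open>\<rat>\<close>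
  and surjectivity force \<open>a = b\<close> to be an order automorphism.\<close>

fun is_plus :: "vert \<Rightarrow> bool" where
  "is_plus (Plus _) = True"
| "is_plus (Minus _) = False"

fun coord :: "vert \<Rightarrow> rat" where
  "coord (Plus q) = q"
| "coord (Minus q) = q"

fun reflect :: "vert \<Rightarrow> vert" where
  "reflect (Plus q) = Minus (- q)"
| "reflect (Minus q) = Plus (- q)"

lemma reflect_reflect [simp]: "reflect (reflect v) = v"
  by (cases v) simp_all

lemma gamma_down_eq_reflect_gamma_up: "gamma_down g = reflect \<circ> gamma_up g"
proof
  fix v show "gamma_down g v = (reflect \<circ> gamma_up g) v" by (cases v) simp_all
qed

lemma gamma_up_comp: "gamma_up g \<circ> gamma_up h = gamma_up (g \<circ> h)"
proof
  fix v show "(gamma_up g \<circ> gamma_up h) v = gamma_up (g \<circ> h) v" by (cases v) simp_all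
qed

lemma gamma_up_id: "gamma_up id = id"
proof
  fix v show "gamma_up id v = id v" by (cases v) simp_all
qed

lemma graph_aut_comp:
  assumes "graph_aut f" and "graph_aut h" shows "graph_aut (f \<circ> h)"
  using assms bij_comp unfolding graph_aut_def by fastforce

lemma graph_aut_reflect: "graph_aut reflect"
proof -
  have "bij reflect" by (rule o_bij[of reflect]) (auto simp: fun_eq_iff)
  moreover have "G_edge u v \<longleftrightarrow> G_edge (reflect u) (reflect v)" for u v
    by (cases u; cases v) auto
  ultimately show ?thesis unfolding graph_aut_def by blast
qed

lemma graph_aut_gamma_up:
  assumes "order_aut g" shows "graph_aut (gamma_up g)"
proof -
  have g: "bij g" "\<And>q r. q < r \<longleftrightarrow> g q < g r" using assms unfolding order_aut_def by auto
  have "bij (gamma_up g)"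
  proof (rule o_bij[of "gamma_up (inv g)"])
    show "gamma_up (inv g) \<circ> gamma_up g = id" "gamma_up g \<circ> gamma_up (inv g) = id"
      using g(1) by (simp_all add: gamma_up_comp gamma_up_id bij_is_inj bij_is_surj
          surj_iff[THEN iffD1])
  qed
  moreover have "G_edge u v \<longleftrightarrow> G_edge (gamma_up g u) (gamma_up g v)" for u v
    by (cases u; cases v) (simp_all add: g(2)[symmetric])
  ultimately show ?thesis unfolding graph_aut_def by blast
qed

lemma graph_aut_gamma_down: "order_aut g \<Longrightarrow> graph_aut (gamma_down g)"
  by (simp add: gamma_down_eq_reflect_gamma_up graph_aut_comp graph_aut_reflect graph_aut_gamma_up)

lemma common_neighbour_iff_same_side: "(\<exists>w. G_edge u w \<and> G_edge v w) \<longleftrightarrow> is_plus u = is_plus v"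
proof (cases u; cases v)
  fix q r assume "u = Plus q" "v = Plus r"
  then show ?thesis by (auto intro!: exI[of _ "Minus (max q r + 1)"])
next
  fix q r assume "u = Minus q" "v = Minus r"
  then show ?thesis by (auto intro!: exI[of _ "Plus (min q r - 1)"])
next
  fix q r assume "u = Plus q" "v = Minus r"
  then show ?thesis by (auto elim: G_edge.elims)
next
  fix q r assume "u = Minus q" "v = Plus r"
  then show ?thesis by (auto elim: G_edge.elims)
qed

lemma graph_aut_same_side_iff:
  assumes "graph_aut f" shows "is_plus (f u) = is_plus (f v) \<longleftrightarrow> is_plus u = is_plus v"
proof -
  have f: "surj f" "\<And>u v. G_edge u v \<longleftrightarrow> G_edge (f u) (f v)"
    using assms bij_is_surj unfolding graph_aut_def by auto
  have "(\<exists>w. G_edge (f u) w \<and> G_edge (f v) w) \<longleftrightarrow> (\<exists>w. G_edge u w \<and> G_edge v w)"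
    using f by (metis surj_f_inv_f)
  then show ?thesis by (simp add: common_neighbour_iff_same_side)
qed

text \<open>The midpoint of \<open>q < q'\<close> separates \<open>a q\<close> from \<open>a q'\<close>, giving monotonicity; a
  preimage under \<open>a\<close> of the midpoint between \<open>b q\<close> and \<open>a q\<close> rules out \<open>b q < a q\<close>.\<close>
lemma order_aut_of_interleaving:
  fixes a b :: "rat \<Rightarrow> rat"
  assumes "surj a" and interleave: "\<And>q r. q < r \<longleftrightarrow> a q < b r"
  shows "a = b" and "order_aut a"
proof -
  have mono: "strict_mono a"
  proof (rule strict_monoI)
    fix q q' :: rat assume "q < q'"
    then have "a q < b ((q + q') / 2)" "\<not> a q' < b ((q + q') / 2)"
      using interleave by (auto simp: field_simps)
    then show "a q < a q'" by linarith
  qed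
  show "order_aut a"
    using mono \<open>surj a\<close> unfolding order_aut_def bij_def
    by (simp add: strict_mono_imp_inj_on strict_mono_less)
  have "a q = b q" for q
  proof (rule ccontr)
    assume "a q \<noteq> b q"
    moreover have "\<not> a q < b q" using interleave[of q q] by simp
    ultimately have "b q < a q" by linarith
    moreover obtain q' where q': "a q' = (a q + b q) / 2" using \<open>surj a\<close> by (metis surjD)
    ultimately have "b q < a q'" "a q' < a q" by (auto simp: field_simps)
    then have "q \<le> q'" using interleave[of q' q] by simp
    then have "a q \<le> a q'" using mono by (simp add: strict_mono_less_eq)
    with \<open>a q' < a q\<close> show False by simp
  qed
  then show "a = b" by blast
qed

lemma graph_aut_side_preserving:
  assumes "graph_aut f" and "is_plus (f (Plus 0))"
  shows "\<exists>g. order_aut g \<and> f = gamma_up g"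
proof -
  have f: "surj f" "\<And>u v. G_edge u v \<longleftrightarrow> G_edge (f u) (f v)"
    using assms(1) bij_is_surj unfolding graph_aut_def by auto
  have side: "is_plus (f v) = is_plus v" for v
    using graph_aut_same_side_iff[OF assms(1), of v "Plus 0"] assms(2) by simp
  define a where "a q = coord (f (Plus q))" for q
  define b where "b q = coord (f (Minus q))" for q
  have f_plus: "f (Plus q) = Plus (a q)" for q
    using side[of "Plus q"] unfolding a_def by (cases "f (Plus q)") auto
  have f_minus: "f (Minus q) = Minus (b q)" for q
    using side[of "Minus q"] unfolding b_def by (cases "f (Minus q)") auto
  have "surj a" unfolding surj_def
  proof
    fix y
    obtain v where v: "f v = Plus y" using \<open>surj f\<close> by (metis surjD)
    then show "\<exists>q. y = a q" using side[of v] f_plus by (cases v) auto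
  qed
  moreover have "q < r \<longleftrightarrow> a q < b r" for q r
    using f(2)[of "Plus q" "Minus r"] by (simp add: f_plus f_minus)
  ultimately have "a = b" "order_aut a" by (rule order_aut_of_interleaving)+
  moreover have "f = gamma_up a"
  proof
    fix v show "f v = gamma_up a v" by (cases v) (simp_all add: f_plus f_minus \<open>a = b\<close>)
  qed
  ultimately show ?thesis by blast
qed

theorem mainTheorem2:
  shows "(\<forall>g. order_aut g \<longrightarrow> graph_aut (gamma_up g) \<and> graph_aut (gamma_down g))
       \<and> (\<forall>f. graph_aut f \<longrightarrow> (\<exists>g. order_aut g \<and> (f = gamma_up g \<or> f = gamma_down g)))"
proof (intro conjI allI impI)
  fix g assume "order_aut g"
  then show "graph_aut (gamma_up g)" "graph_aut (gamma_down g)"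
    by (simp_all add: graph_aut_gamma_up graph_aut_gamma_down)
next
  fix f assume f: "graph_aut f"
  show "\<exists>g. order_aut g \<and> (f = gamma_up g \<or> f = gamma_down g)"
  proof (cases "is_plus (f (Plus 0))")
    case True
    then show ?thesis using graph_aut_side_preserving[OF f] by blast
  next
    case False
    then have "is_plus ((reflect \<circ> f) (Plus 0))" by (cases "f (Plus 0)") simp_all
    then obtain g where "order_aut g" "reflect \<circ> f = gamma_up g"
      using graph_aut_side_preserving graph_aut_comp[OF graph_aut_reflect f] by blast
    have "f = reflect \<circ> (reflect \<circ> f)" by (simp add: fun_eq_iff)
    also have "\<dots> = gamma_down g"
      by (simp add: \<open>reflect \<circ> f = gamma_up g\<close> gamma_down_eq_reflect_gamma_up)
    finally have "f = gamma_down g" .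
    with \<open>order_aut g\<close> show ?thesis by blast
  qed
qed

end
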